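(* Let $\kappa<\Gamma$ be infinite cardinals and let $f\mapsto\hat f$ be a surjective linear isometry from $X^{\kappa,\Gamma}$ onto $C(K^{\kappa,\Gamma})$ preserving pointwise multiplication and order, $K^{\kappa,\Gamma}$ compact. Then there is a point $p\in K^{\kappa,\Gamma}$ such that $\{\hat f: f\in X_0^{\kappa,\Gamma}\}=C(K^{\kappa,\Gamma},p)$; consequently $X_0^{\kappa,\Gamma}$ is isometric to $C(K^{\kappa,\Gamma},p)$. Moreover, $p$ is a $P$-point of $K^{\kappa,\Gamma}$.
   Context: $X^{\kappa,\Gamma}=\{f\in\ell_\infty(\Gamma):\exists A\subseteq\Gamma,\ |A|=\kappa,\ f|_{\Gamma\setminus A}\text{ is constant}\}$ and $X_0^{\kappa,\Gamma}=\{f\in\ell_\infty(\Gamma):\exists A\subseteq\Gamma,\ |A|=\kappa,\ f|_{\Gamma\setminus A}\equiv 0\}$, both with the sup norm. For compact $K$ and $p\in K$, $C(K,p)=\{f\in C(K):f(p)=0\}$. A point $p\in K$ is a $P$-point if every $g\in C(K)$ is constant on some open neighbourhood of $p$. *)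

theory Defs
  imports "HOL-Analysis.Analysis"
begin

definition supnorm :: "('a \<Rightarrow> real) \<Rightarrow> real" where
  "supnorm f = (SUP x. \<bar>f x\<bar>)"

text \<open>\<open>X^{\<kappa>,\<Gamma>}\<close>: \<open>\<Gamma>\<close> is the universe of type 'g, \<open>\<kappa>\<close> the cardinality of type 'k.\<close>
definition Xspace :: "'k itself \<Rightarrow> ('g \<Rightarrow> real) set" where
  "Xspace _ = {f. bounded (range f) \<and>
     (\<exists>A::'g set. (card_of A, card_of (UNIV::'k set)) \<in> ordIso \<and>
        (\<exists>c. \<forall>x. x \<notin> A \<longrightarrow> f x = c))}"

definition X0space :: "'k itself \<Rightarrow> ('g \<Rightarrow> real) set" where
  "X0space _ = {f. bounded (range f) \<and>
     (\<exists>A::'g set. (card_of A, card_of (UNIV::'k set)) \<in> ordIso \<and>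
        (\<forall>x. x \<notin> A \<longrightarrow> f x = 0))}"

definition CK :: "('c::topological_space \<Rightarrow> real) set" where
  "CK = {g. continuous_on UNIV g}"

definition CKp :: "'c::topological_space \<Rightarrow> ('c \<Rightarrow> real) set" where
  "CKp p = {g. continuous_on UNIV g \<and> g p = 0}"

definition P_point :: "'c::topological_space \<Rightarrow> bool" where
  "P_point p \<longleftrightarrow> (\<forall>g::'c \<Rightarrow> real. continuous_on UNIV g \<longrightarrow>
      (\<exists>U. open U \<and> p \<in> U \<and> (\<forall>x\<in>U. g x = g p)))"

end

theory Submission
  imports Defs
begin

text \<open>Write \<open>T\<close> for the map \<open>f \<mapsto> f\<^sup>^\<close>. For \<open>|A| = \<kappa>\<close> the indicator \<open>1\<^sub>A\<close> is idempotent,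
  so \<open>T 1\<^sub>A\<close> is \<open>{0,1}\<close>-valued; its zero set is closed, and nonempty because \<open>T\<close> is
  injective and \<open>1\<^sub>A \<noteq> 1\<close> (as \<open>\<kappa> < \<Gamma>\<close>). Since \<open>1\<^sub>A \<cdot> 1\<^sub>B = 1\<^sub>A\<close> for \<open>A \<subseteq> B\<close> and
  \<open>\<kappa>\<close>-sized sets are closed under finite unions, these zero sets have the finite intersection
  property, so by compactness they share a point \<open>p\<close>. If \<open>f\<close> is constant \<open>c\<close> off \<open>A\<close>, then
  \<open>f - c = (f - c) \<cdot> 1\<^sub>A\<close>, so \<open>T f = c\<close> on the open neighbourhood \<open>{T 1\<^sub>A < 1/2}\<close> of \<open>p\<close>.\<close>

definition equipotent_subsets :: "'k itself \<Rightarrow> 'g set set" where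
  "equipotent_subsets _ = {A. (card_of A, card_of (UNIV :: 'k set)) \<in> ordIso}"

lemma equipotent_subsets_Un:
  fixes kappa :: "'k itself"
  assumes "infinite (UNIV :: 'k set)"
    and "A \<in> equipotent_subsets kappa" "B \<in> equipotent_subsets kappa"
  shows "A \<union> B \<in> equipotent_subsets kappa"
proof -
  have A: "(card_of A, card_of (UNIV :: 'k set)) \<in> ordIso"
    and B: "(card_of B, card_of (UNIV :: 'k set)) \<in> ordIso"
    using assms(2,3) by (auto simp: equipotent_subsets_def)
  have "(card_of (A \<union> B), card_of (UNIV :: 'k set)) \<in> ordLeq"
    using assms(1) A B ordIso_iff_ordLeq
    by (intro card_of_Un_ordLeq_infinite_Field) (auto simp: Field_card_of card_of_Card_order card_of_card_order_on)
  moreover have "(card_of (UNIV :: 'k set), card_of (A \<union> B)) \<in> ordLeq"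
    using ordIso_ordLeq_trans[OF ordIso_symmetric[OF A] card_of_mono1[OF Un_upper1]] .
  ultimately show ?thesis
    by (simp add: equipotent_subsets_def ordIso_iff_ordLeq)
qed

lemma equipotent_subsets_Union:
  fixes kappa :: "'k itself"
  assumes "infinite (UNIV :: 'k set)"
    and "finite F" "F \<noteq> {}" "F \<subseteq> equipotent_subsets kappa"
  shows "\<Union>F \<in> equipotent_subsets kappa"
  using assms(2-4) by (induction F rule: finite_ne_induct) (auto intro: equipotent_subsets_Un[OF assms(1)])

lemma equipotent_subsets_neq_UNIV:
  fixes kappa :: "'k itself"
  assumes "(card_of (UNIV :: 'k set), card_of (UNIV :: 'g set)) \<in> ordLess"
    and "A \<in> equipotent_subsets kappa"
  shows "A \<noteq> (UNIV :: 'g set)"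
proof
  assume "A = UNIV"
  with assms(2) have "(card_of (UNIV :: 'g set), card_of (UNIV :: 'k set)) \<in> ordIso"
    by (simp add: equipotent_subsets_def)
  with assms(1) show False
    using not_ordLess_ordIso ordIso_symmetric by blast
qed

lemma equipotent_subsets_nonempty:
  fixes kappa :: "'k itself"
  assumes "(card_of (UNIV :: 'k set), card_of (UNIV :: 'g set)) \<in> ordLeq"
  shows "equipotent_subsets kappa \<noteq> ({} :: 'g set set)"
proof -
  obtain j :: "'k \<Rightarrow> 'g" where "inj j"
    using iffD2[OF card_of_ordLeq assms] by blast
  then have "(card_of (UNIV :: 'k set), card_of (range j)) \<in> ordIso"
    using iffD1[OF card_of_ordIso] inj_on_imp_bij_betw by blast
  then have "range j \<in> equipotent_subsets kappa"
    using ordIso_symmetric by (simp add: equipotent_subsets_def)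
  then show ?thesis
    by blast
qed

lemma Xspace_iff:
  "f \<in> Xspace kappa \<longleftrightarrow> bounded (range f) \<and>
     (\<exists>A \<in> equipotent_subsets kappa. \<exists>c. \<forall>x. x \<notin> A \<longrightarrow> f x = c)"
  by (auto simp: Xspace_def equipotent_subsets_def)

lemma X0space_iff:
  "f \<in> X0space kappa \<longleftrightarrow> bounded (range f) \<and>
     (\<exists>A \<in> equipotent_subsets kappa. \<forall>x. x \<notin> A \<longrightarrow> f x = 0)"
  by (auto simp: X0space_def equipotent_subsets_def)

lemma X0space_subset_Xspace: "X0space kappa \<subseteq> Xspace kappa"
  by (auto simp: Xspace_def X0space_def)

lemma indicator_in_Xspace:
  "A \<in> equipotent_subsets kappa \<Longrightarrow> (indicator A :: 'g \<Rightarrow> real) \<in> Xspace kappa"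
  unfolding Xspace_iff bounded_iff by (intro conjI exI bexI[of _ A]) auto

lemma const_in_Xspace:
  fixes kappa :: "'k itself"
  assumes "(card_of (UNIV :: 'k set), card_of (UNIV :: 'g set)) \<in> ordLeq"
  shows "(\<lambda>x :: 'g. c) \<in> Xspace kappa"
  using equipotent_subsets_nonempty[OF assms] by (auto simp: Xspace_iff)

lemma diff_const_in_X0space:
  assumes "f \<in> Xspace kappa" "A \<in> equipotent_subsets kappa" "\<forall>x. x \<notin> A \<longrightarrow> f x = c"
  shows "(\<lambda>x. f x - c) \<in> X0space kappa"
  using assms bounded_minus_comp[of f UNIV "\<lambda>_. c"] by (auto simp: Xspace_iff X0space_iff)

lemma abs_le_supnorm:
  fixes f :: "'a \<Rightarrow> real"
  assumes "bounded (range f)"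
  shows "\<bar>f x\<bar> \<le> supnorm f"
  unfolding supnorm_def
  using assms by (intro cSUP_upper) (auto simp: bounded_iff bdd_above_def)

lemma isometry_imp_inj_on:
  assumes "\<And>f g. f \<in> S \<Longrightarrow> g \<in> S \<Longrightarrow> supnorm (\<lambda>t. T f t - T g t) = supnorm (\<lambda>x. f x - g x)"
    and "\<And>f. f \<in> S \<Longrightarrow> bounded (range (f :: 'a \<Rightarrow> real))"
  shows "inj_on T S"
proof (rule inj_onI)
  fix f g assume f: "f \<in> S" and g: "g \<in> S" and "T f = T g"
  then have "supnorm (\<lambda>x. f x - g x) = 0"
    using assms(1)[OF f g] by (simp add: supnorm_def)
  then show "f = g"
    using abs_le_supnorm[OF bounded_minus_comp[OF assms(2)[OF f] assms(2)[OF g]]]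
    by (force simp: fun_eq_iff)
qed

locale multiplicative_representation =
  fixes T :: "('g \<Rightarrow> real) \<Rightarrow> ('c::topological_space \<Rightarrow> real)"
    and kappa :: "'k itself"
  assumes kappa_infinite: "infinite (UNIV :: 'k set)"
    and kappa_less: "(card_of (UNIV :: 'k set), card_of (UNIV :: 'g set)) \<in> ordLess"
    and compact_K: "compact (UNIV :: 'c set)"
    and onto: "T ` Xspace kappa = CK"
    and linear: "\<And>f g a b. f \<in> Xspace kappa \<Longrightarrow> g \<in> Xspace kappa \<Longrightarrow>
                  T (\<lambda>x. a * f x + b * g x) = (\<lambda>t. a * T f t + b * T g t)"
    and multiplicative: "\<And>f g. f \<in> Xspace kappa \<Longrightarrow> g \<in> Xspace kappa \<Longrightarrow>
                  T (\<lambda>x. f x * g x) = (\<lambda>t. T f t * T g t)"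
    and injective: "inj_on T (Xspace kappa)"
begin

lemma Xspace_const: "(\<lambda>x::'g. c) \<in> Xspace kappa"
  by (rule const_in_Xspace[OF ordLess_imp_ordLeq[OF kappa_less]])

lemma continuous_on_T: "f \<in> Xspace kappa \<Longrightarrow> continuous_on UNIV (T f)"
  using onto by (auto simp: CK_def)

lemma T_surjE:
  assumes "continuous_on UNIV g"
  obtains f where "f \<in> Xspace kappa" "T f = g"
  using assms onto by (metis CK_def imageE mem_Collect_eq)

lemma T_const: "T (\<lambda>x. c) = (\<lambda>t. c)"
proof -
  obtain v where v: "v \<in> Xspace kappa" "T v = (\<lambda>t. 1)"
    using T_surjE[of "\<lambda>t. 1"] by auto
  have "T (\<lambda>x. 1) = (\<lambda>t. 1)"
    using multiplicative[OF v(1) Xspace_const[of 1]] v by simp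
  then show ?thesis
    using linear[OF Xspace_const[of 1] Xspace_const[of 1], of c 0] by simp
qed

lemma T_diff_const:
  assumes "f \<in> Xspace kappa"
  shows "T (\<lambda>x. f x - c) = (\<lambda>t. T f t - c)"
  using linear[OF assms Xspace_const[of 1], of 1 "-c"] T_const by simp

lemma T_vanishing_off:
  assumes "f \<in> Xspace kappa" "A \<in> equipotent_subsets kappa" "\<forall>x. x \<notin> A \<longrightarrow> f x = 0"
  shows "T f t = T f t * T (indicator A) t"
proof -
  have "(\<lambda>x. f x * indicator A x) = f"
    using assms(3) by (auto simp: fun_eq_iff indicator_def)
  then show ?thesis
    using multiplicative[OF assms(1) indicator_in_Xspace[OF assms(2)]] by metis
qed

lemma T_indicator_cases:
  assumes "A \<in> equipotent_subsets kappa"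
  shows "T (indicator A) t = 0 \<or> T (indicator A) t = 1"
proof -
  have "T (indicator A) t = T (indicator A) t * T (indicator A) t"
    using T_vanishing_off[OF indicator_in_Xspace[OF assms] assms] by simp
  then show ?thesis
    by (metis mult_cancel_left2)
qed

lemma T_indicator_has_zero:
  assumes "A \<in> equipotent_subsets kappa"
  shows "\<exists>t. T (indicator A) t = 0"
proof (rule ccontr)
  assume "\<nexists>t. T (indicator A) t = 0"
  then have "T (indicator A) = T (\<lambda>x. 1)"
    using T_indicator_cases[OF assms] T_const by auto
  then have "indicator A = (\<lambda>x::'g. 1::real)"
    by (rule inj_onD[OF injective _ indicator_in_Xspace[OF assms] Xspace_const])
  then show False
    using equipotent_subsets_neq_UNIV[OF kappa_less assms] by (auto simp: fun_eq_iff indicator_def)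
qed

definition vanishing_point :: "'c \<Rightarrow> bool" where
  "vanishing_point p \<longleftrightarrow> (\<forall>A \<in> equipotent_subsets kappa. T (indicator A) p = 0)"

lemma vanishing_point_exists: "\<exists>p. vanishing_point p"
proof -
  have "UNIV \<inter> (\<Inter>A \<in> equipotent_subsets kappa. {t. T (indicator A) t = 0}) \<noteq> {}"
  proof (rule compact_imp_fip_image[OF compact_K])
    show "closed {t. T (indicator A) t = 0}" if "A \<in> equipotent_subsets kappa" for A
      using continuous_on_T[OF indicator_in_Xspace[OF that]]
      by (intro closed_Collect_eq) auto
    fix F :: "'g set set" assume F: "finite F" "F \<subseteq> equipotent_subsets kappa"
    show "UNIV \<inter> (\<Inter>A \<in> F. {t. T (indicator A) t = 0}) \<noteq> {}"
    proof (cases "F = {}")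
      case False
      have U: "\<Union>F \<in> equipotent_subsets kappa"
        using equipotent_subsets_Union[OF kappa_infinite F(1) False F(2)] .
      then obtain t where t: "T (indicator (\<Union>F)) t = 0"
        using T_indicator_has_zero by blast
      have "T (indicator A) t = 0" if "A \<in> F" for A
        using T_vanishing_off[OF indicator_in_Xspace, of A "\<Union>F" t] F(2) U t that
        by (auto simp: indicator_def)
      then show ?thesis by blast
    qed simp
  qed
  then show ?thesis
    by (auto simp: vanishing_point_def)
qed

lemma T_locally_const:
  assumes p: "vanishing_point p"
    and f: "f \<in> Xspace kappa" and A: "A \<in> equipotent_subsets kappa" "\<forall>x. x \<notin> A \<longrightarrow> f x = c"
  shows "\<exists>U. open U \<and> p \<in> U \<and> (\<forall>t\<in>U. T f t = c)"
proof (intro exI conjI)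
  have h: "(\<lambda>x. f x - c) \<in> Xspace kappa"
    using diff_const_in_X0space[OF f A] X0space_subset_Xspace by blast
  show "open {t. T (indicator A) t < 1/2}"
    using continuous_on_T[OF indicator_in_Xspace[OF A(1)]] by (intro open_Collect_less) auto
  show "p \<in> {t. T (indicator A) t < 1/2}"
    using p A(1) by (simp add: vanishing_point_def)
  show "\<forall>t \<in> {t. T (indicator A) t < 1/2}. T f t = c"
  proof
    fix t assume "t \<in> {t. T (indicator A) t < 1/2}"
    then have "T (indicator A) t = 0"
      using T_indicator_cases[OF A(1), of t] by auto
    then show "T f t = c"
      using T_vanishing_off[OF h A(1), of t] A(2) T_diff_const[OF f, of c] by (simp add: fun_eq_iff)
  qed
qed

lemma T_at_vanishing_point:
  assumes "vanishing_point p"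
    and "f \<in> Xspace kappa" "A \<in> equipotent_subsets kappa" "\<forall>x. x \<notin> A \<longrightarrow> f x = c"
  shows "T f p = c"
  using T_locally_const[OF assms] by blast

lemma image_X0space:
  assumes p: "vanishing_point p"
  shows "T ` X0space kappa = CKp p"
proof
  show "T ` X0space kappa \<subseteq> CKp p"
  proof
    fix g assume "g \<in> T ` X0space kappa"
    then obtain f where f: "f \<in> X0space kappa" "T f = g"
      by blast
    then obtain A where A: "A \<in> equipotent_subsets kappa" "\<forall>x. x \<notin> A \<longrightarrow> f x = 0"
      by (auto simp: X0space_iff)
    have "f \<in> Xspace kappa"
      using f(1) X0space_subset_Xspace by blast
    then show "g \<in> CKp p"
      using T_at_vanishing_point[OF p _ A] continuous_on_T f(2) by (auto simp: CKp_def)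
  qed
  show "CKp p \<subseteq> T ` X0space kappa"
  proof
    fix g assume g: "g \<in> CKp p"
    then obtain f where f: "f \<in> Xspace kappa" "T f = g"
      using T_surjE by (auto simp: CKp_def)
    then obtain A c where A: "A \<in> equipotent_subsets kappa" "\<forall>x. x \<notin> A \<longrightarrow> f x = c"
      by (auto simp: Xspace_iff)
    have "c = 0"
      using T_at_vanishing_point[OF p f(1) A] g f(2) by (simp add: CKp_def)
    then have "f \<in> X0space kappa"
      using f(1) A by (auto simp: Xspace_iff X0space_iff)
    then show "g \<in> T ` X0space kappa"
      using f(2) by blast
  qed
qed

lemma P_point_vanishing_point:
  assumes p: "vanishing_point p"
  shows "P_point p"
  unfolding P_point_def
proof (intro allI impI)
  fix g :: "'c \<Rightarrow> real" assume "continuous_on UNIV g"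
  then obtain f where f: "f \<in> Xspace kappa" "T f = g"
    using T_surjE by blast
  then obtain A c where A: "A \<in> equipotent_subsets kappa" "\<forall>x. x \<notin> A \<longrightarrow> f x = c"
    by (auto simp: Xspace_iff)
  show "\<exists>U. open U \<and> p \<in> U \<and> (\<forall>x\<in>U. g x = g p)"
    using T_locally_const[OF p f(1) A] T_at_vanishing_point[OF p f(1) A] f(2) by auto
qed

end

theorem mainTheorem10:
  fixes T :: "('g \<Rightarrow> real) \<Rightarrow> ('c::t2_space \<Rightarrow> real)"
  assumes kinf: "infinite (UNIV :: 'k set)"
    and ginf: "infinite (UNIV :: 'g set)"
    and kless: "(card_of (UNIV :: 'k set), card_of (UNIV :: 'g set)) \<in> ordLess"
    and Kcomp: "compact (UNIV :: 'c set)"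
    and onto: "T ` Xspace TYPE('k) = CK"
    and lin: "\<And>f g a b. f \<in> Xspace TYPE('k) \<Longrightarrow> g \<in> Xspace TYPE('k) \<Longrightarrow>
                T (\<lambda>x. a * f x + b * g x) = (\<lambda>t. a * T f t + b * T g t)"
    and isom: "\<And>f g. f \<in> Xspace TYPE('k) \<Longrightarrow> g \<in> Xspace TYPE('k) \<Longrightarrow>
                supnorm (\<lambda>t. T f t - T g t) = supnorm (\<lambda>x. f x - g x)"
    and mult: "\<And>f g. f \<in> Xspace TYPE('k) \<Longrightarrow> g \<in> Xspace TYPE('k) \<Longrightarrow>
                T (\<lambda>x. f x * g x) = (\<lambda>t. T f t * T g t)"
    and order: "\<And>f g. f \<in> Xspace TYPE('k) \<Longrightarrow> g \<in> Xspace TYPE('k) \<Longrightarrow>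
                (\<forall>x. f x \<le> g x) \<Longrightarrow> (\<forall>t. T f t \<le> T g t)"
  shows "\<exists>p::'c. T ` X0space TYPE('k) = CKp p
           \<and> (\<exists>S :: ('g \<Rightarrow> real) \<Rightarrow> ('c \<Rightarrow> real). S ` X0space TYPE('k) = CKp p
                  \<and> inj_on S (X0space TYPE('k))
                  \<and> (\<forall>f\<in>X0space TYPE('k). \<forall>g\<in>X0space TYPE('k). \<forall>a b.
                        S (\<lambda>x. a * f x + b * g x) = (\<lambda>t. a * S f t + b * S g t))
                  \<and> (\<forall>f\<in>X0space TYPE('k). \<forall>g\<in>X0space TYPE('k).
                        supnorm (\<lambda>t. S f t - S g t) = supnorm (\<lambda>x. f x - g x)))
           \<and> P_point p"
proof -
  \<comment> \<open>\<open>ginf\<close> follows from \<open>kinf\<close> and \<open>kless\<close>, and \<open>order\<close> from multiplicativity.\<close>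
  have inj: "inj_on T (Xspace TYPE('k))"
    by (rule isometry_imp_inj_on[OF isom]) (auto simp: Xspace_iff)
  interpret multiplicative_representation T "TYPE('k)"
    using kinf kless Kcomp onto lin mult inj by unfold_locales
  obtain p where p: "vanishing_point p"
    using vanishing_point_exists by blast
  have X0: "X0space TYPE('k) \<subseteq> Xspace TYPE('k)"
    by (rule X0space_subset_Xspace)
  show ?thesis
  proof (intro exI conjI)
    show "T ` X0space TYPE('k) = CKp p"
      using image_X0space[OF p] .
    then show "T ` X0space TYPE('k) = CKp p" .
    show "inj_on T (X0space TYPE('k))"
      using inj X0 inj_on_subset by blast
    show "\<forall>f\<in>X0space TYPE('k). \<forall>g\<in>X0space TYPE('k). \<forall>a b.
            T (\<lambda>x. a * f x + b * g x) = (\<lambda>t. a * T f t + b * T g t)"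
      using lin X0 by blast
    show "\<forall>f\<in>X0space TYPE('k). \<forall>g\<in>X0space TYPE('k).
            supnorm (\<lambda>t. T f t - T g t) = supnorm (\<lambda>x. f x - g x)"
      using isom X0 by blast
    show "P_point p"
      using P_point_vanishing_point[OF p] .
  qed
qed

end
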